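(* Let $m\ge1$ and $0\le r\le m$. Let $\mathcal{G}\subseteq F_{m,r}$ be a linear subspace such that $\pi(\mathcal{G})=\mathcal{G}$ for all $\pi\in Sym(m,r)$. Then $\mathcal{G}=\{0\}$ or $\mathcal{G}=F_{m,r}$.
   Context: $F_{m,r}$ is the $\mathbb{F}_2$-vector space with basis the monomials $x_I=\prod_{i\in I}x_i$, $I\subseteq[m]$, $|I|=r$ (homogeneous degree-$r$ multilinear polynomials over $\mathbb{F}_2$ in $x_1,\dots,x_m$). For $A\in GL_m(\mathbb{F}_2)$ and $b\in\mathbb{F}_2^m$, the map $\pi_{A,b}:F_{m,r}\to F_{m,r}$ sends $P$ to the degree-$r$ homogeneous part of the multilinear reduction (using $x_i^2=x_i$) of $P(Ax+b)$. $Sym(m,r)$ is the set of all such maps $\pi_{A,b}$. *)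

theory Defs
  imports Main
begin

text \<open>Multilinear polynomials over F_2 in variables x_0, ..., x_(m-1) are represented
  as (finite) sets of monomials; a monomial x_I is represented by its variable set I.
  Addition is symmetric difference; the product is the multilinear reduction
  (x_i^2 = x_i) of the ordinary product, i.e. x_I * x_J = x_(I union J), with
  coefficients counted mod 2.\<close>

type_synonym mlpoly = "nat set set"

definition madd :: "mlpoly \<Rightarrow> mlpoly \<Rightarrow> mlpoly" where
  "madd P Q = (P - Q) \<union> (Q - P)"

definition mmul :: "mlpoly \<Rightarrow> mlpoly \<Rightarrow> mlpoly" where
  "mmul P Q = {K. odd (card {(I, J). I \<in> P \<and> J \<in> Q \<and> I \<union> J = K})}"

definition mone :: mlpoly where
  "mone = {{}}"

definition mprod_list :: "mlpoly list \<Rightarrow> mlpoly" where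
  "mprod_list ps = foldr mmul ps mone"

definition msubst :: "(nat \<Rightarrow> mlpoly) \<Rightarrow> mlpoly \<Rightarrow> mlpoly" where
  "msubst s P = {K. odd (card {I \<in> P. K \<in> mprod_list (map s (sorted_list_of_set I))})}"

definition hom_part :: "nat \<Rightarrow> mlpoly \<Rightarrow> mlpoly" where
  "hom_part r P = {K \<in> P. card K = r}"

definition Fmr :: "nat \<Rightarrow> nat \<Rightarrow> mlpoly set" where
  "Fmr m r = Pow {I. I \<subseteq> {0..<m} \<and> card I = r}"

text \<open>m x m matrices over F_2 (entries indexed by i, j < m; True = 1).\<close>
definition matmul2 :: "nat \<Rightarrow> (nat \<Rightarrow> nat \<Rightarrow> bool) \<Rightarrow> (nat \<Rightarrow> nat \<Rightarrow> bool) \<Rightarrow> nat \<Rightarrow> nat \<Rightarrow> bool" where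
  "matmul2 m A B i k = odd (card {j. j < m \<and> A i j \<and> B j k})"

definition GL2 :: "nat \<Rightarrow> (nat \<Rightarrow> nat \<Rightarrow> bool) set" where
  "GL2 m = {A. \<exists>B. (\<forall>i<m. \<forall>k<m. matmul2 m A B i k = (i = k))
                 \<and> (\<forall>i<m. \<forall>k<m. matmul2 m B A i k = (i = k))}"

definition aff_form :: "nat \<Rightarrow> (nat \<Rightarrow> nat \<Rightarrow> bool) \<Rightarrow> (nat \<Rightarrow> bool) \<Rightarrow> nat \<Rightarrow> mlpoly" where
  "aff_form m A b i = {{j} | j. j < m \<and> A i j} \<union> (if b i then {{}} else {})"

definition pi_map :: "nat \<Rightarrow> nat \<Rightarrow> (nat \<Rightarrow> nat \<Rightarrow> bool) \<Rightarrow> (nat \<Rightarrow> bool) \<Rightarrow> mlpoly \<Rightarrow> mlpoly" where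
  "pi_map m r A b P = hom_part r (msubst (aff_form m A b) P)"

definition Sym :: "nat \<Rightarrow> nat \<Rightarrow> (mlpoly \<Rightarrow> mlpoly) set" where
  "Sym m r = {pi_map m r A b | A b. A \<in> GL2 m}"

text \<open>F_2-linear subspace of F_{m,r} (scalars are 0,1, so closure under + suffices).\<close>
definition lin_subspace :: "nat \<Rightarrow> nat \<Rightarrow> mlpoly set \<Rightarrow> bool" where
  "lin_subspace m r G \<longleftrightarrow> G \<subseteq> Fmr m r \<and> {} \<in> G \<and> (\<forall>P\<in>G. \<forall>Q\<in>G. madd P Q \<in> G)"

end

theory Submission
  imports Defs
begin

(* The substitution x_a := x_a + x_b with a, b distinct maps a degree-r monomial x_I with a in I,
   b not in I to x_I + x_(I - a + b), and fixes every other monomial up to terms of lower degree.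
   Hence an invariant subspace is closed under the linear exchange operator P |-> pi(P) + P, and
   composing the exchanges for (a, b) and (b, a) keeps exactly the monomials of P containing a
   but not b. Separating two distinct monomials of P in this way isolates a single monomial in G;
   exchanges then move it to every monomial of degree r, and these span F_{m,r}. *)

lemma mmul_eq_image_union:
  assumes "inj_on (\<lambda>(I, J). I \<union> J) (P \<times> Q)"
  shows "mmul P Q = (\<lambda>(I, J). I \<union> J) ` (P \<times> Q)"
proof -
  have "card {(I, J). I \<in> P \<and> J \<in> Q \<and> I \<union> J = K}
      = (if K \<in> (\<lambda>(I, J). I \<union> J) ` (P \<times> Q) then 1 else 0)" for K
  proof (cases "K \<in> (\<lambda>(I, J). I \<union> J) ` (P \<times> Q)")
    case True
    then obtain I J where IJ: "I \<in> P" "J \<in> Q" "K = I \<union> J" by blast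
    have "(I', J') = (I, J)" if "I' \<in> P" "J' \<in> Q" "I' \<union> J' = K" for I' J'
      using inj_onD[OF assms, of "(I', J')" "(I, J)"] that IJ by simp
    with IJ have "{(I', J'). I' \<in> P \<and> J' \<in> Q \<and> I' \<union> J' = K} = {(I, J)}"
      by auto
    with True show ?thesis by simp
  next
    case False
    then have empty: "{(I, J). I \<in> P \<and> J \<in> Q \<and> I \<union> J = K} = {}"
      by blast
    show ?thesis
      unfolding empty using False by simp
  qed
  then show ?thesis unfolding mmul_def by auto
qed

lemma mmul_singleton_left:
  assumes "inj_on (insert k) Q"
  shows "mmul {{k}} Q = insert k ` Q"
proof -
  have "inj_on (\<lambda>(I, J). I \<union> J) ({{k}} \<times> Q)"
    using assms unfolding inj_on_def by auto
  then show ?thesis by (subst mmul_eq_image_union) auto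
qed

definition transvection :: "nat \<Rightarrow> nat \<Rightarrow> nat \<Rightarrow> nat \<Rightarrow> bool" where
  "transvection a b = (\<lambda>i j. i = j \<or> (i = a \<and> j = b))"

lemma transvection_in_GL2:
  assumes "a < m" "b < m" "a \<noteq> b"
  shows "transvection a b \<in> GL2 m"
proof -
  have "matmul2 m (transvection a b) (transvection a b) i k = (i = k)" if "i < m" "k < m" for i k
  proof -
    have "{j. j < m \<and> transvection a b i j \<and> transvection a b j k} =
        (if i = k then {i} else if i = a \<and> k = b then {a, b} else {})"
      using assms that unfolding transvection_def by auto
    then show ?thesis unfolding matmul2_def using assms by auto
  qed
  then show ?thesis unfolding GL2_def by blast
qed

lemma aff_form_transvection:
  assumes "k < m" "b < m" "a \<noteq> b"
  shows "aff_form m (transvection a b) (\<lambda>_. False) k = (if k = a then {{a}, {b}} else {{k}})"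
  using assms unfolding aff_form_def transvection_def by auto

lemma foldr_mmul_transvection:
  assumes "distinct xs" "set xs \<subseteq> {..<m}" "b < m" "a \<noteq> b"
  shows "foldr mmul (map (aff_form m (transvection a b) (\<lambda>_. False)) xs) mone
     = (if a \<in> set xs then {set xs, insert b (set xs - {a})} else {set xs})"
  using assms
proof (induction xs)
  case Nil
  then show ?case by (simp add: mone_def)
next
  case (Cons k xs)
  then have IH: "foldr mmul (map (aff_form m (transvection a b) (\<lambda>_. False)) xs) mone
     = (if a \<in> set xs then {set xs, insert b (set xs - {a})} else {set xs})"
    and k: "k \<notin> set xs" "k < m" by auto
  show ?case
  proof (cases "k = a")
    case True
    with Cons.prems k have "mmul {{a}, {b}} {set xs} = {set (k # xs), insert b (set (k # xs) - {a})}"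
      by (subst mmul_eq_image_union) (auto simp: inj_on_def)
    with True k IH show ?thesis by (simp add: aff_form_transvection Cons.prems)
  next
    case k_ne_a: False
    show ?thesis
    proof (cases "a \<in> set xs")
      case True
      have "inj_on (insert k) {set xs, insert b (set xs - {a})}"
        using True k_ne_a Cons.prems(4) by (auto simp: inj_on_def)
      moreover have "insert k (insert b (set xs - {a})) = insert b (insert k (set xs) - {a})"
        using k_ne_a by auto
      ultimately show ?thesis
        using True k_ne_a k IH by (simp add: aff_form_transvection Cons.prems mmul_singleton_left)
    next
      case False
      with k_ne_a k IH show ?thesis
        by (simp add: aff_form_transvection Cons.prems mmul_singleton_left)
    qed
  qed
qed

lemma mprod_list_transvection:
  assumes "finite I" "I \<subseteq> {..<m}" "b < m" "a \<noteq> b"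
  shows "mprod_list (map (aff_form m (transvection a b) (\<lambda>_. False)) (sorted_list_of_set I))
     = (if a \<in> I then {I, insert b (I - {a})} else {I})"
  using assms foldr_mmul_transvection[of "sorted_list_of_set I" m b a]
  unfolding mprod_list_def by simp

lemma msubst_empty: "msubst s {} = {}"
  unfolding msubst_def by simp

lemma msubst_insert:
  assumes "finite P" "I \<notin> P"
  shows "msubst s (insert I P) = madd (mprod_list (map s (sorted_list_of_set I))) (msubst s P)"
proof -
  let ?f = "\<lambda>J. mprod_list (map s (sorted_list_of_set J))"
  have "{J \<in> insert I P. K \<in> ?f J}
      = (if K \<in> ?f I then insert I {J \<in> P. K \<in> ?f J} else {J \<in> P. K \<in> ?f J})" for K
    by auto
  then have "odd (card {J \<in> insert I P. K \<in> ?f J})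
      \<longleftrightarrow> (K \<in> ?f I \<longleftrightarrow> even (card {J \<in> P. K \<in> ?f J}))" for K
    using assms by simp
  then show ?thesis unfolding msubst_def madd_def by auto
qed

lemma hom_part_madd: "hom_part r (madd P Q) = madd (hom_part r P) (hom_part r Q)"
  unfolding hom_part_def madd_def by auto

text \<open>The linear map sending \<open>x\<^sub>I\<close> to \<open>x\<^sub>I\<^sub>-\<^sub>a\<^sub>+\<^sub>b\<close> if \<open>a \<in> I\<close>, \<open>b \<notin> I\<close>, and to 0 otherwise.\<close>
definition exchange :: "nat \<Rightarrow> nat \<Rightarrow> mlpoly \<Rightarrow> mlpoly" where
  "exchange a b P = {K. b \<in> K \<and> a \<notin> K \<and> insert a (K - {b}) \<in> P}"

lemma exchange_empty: "exchange a b {} = {}"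
  unfolding exchange_def by simp

lemma exchange_madd: "exchange a b (madd P Q) = madd (exchange a b P) (exchange a b Q)"
  unfolding exchange_def madd_def by auto

lemma exchange_singleton:
  "exchange a b {I} = (if a \<in> I \<and> b \<notin> I then {insert b (I - {a})} else {})"
  unfolding exchange_def by auto

lemma hom_part_mprod_list_transvection:
  assumes "finite I" "I \<subseteq> {..<m}" "card I = r" "b < m" "a \<noteq> b"
  shows "hom_part r (mprod_list (map (aff_form m (transvection a b) (\<lambda>_. False)) (sorted_list_of_set I)))
     = madd {I} (exchange a b {I})"
proof (cases "a \<in> I")
  case False
  with assms show ?thesis
    by (auto simp: mprod_list_transvection exchange_singleton hom_part_def madd_def)
next
  case True
  then have "r > 0"
    using assms by (auto simp: card_gt_0_iff)
  with True assms have "card (insert b (I - {a})) = r \<longleftrightarrow> b \<notin> I"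
    by (auto simp: card_insert_if)
  moreover have "insert b (I - {a}) \<noteq> I"
    using True assms(5) by auto
  ultimately show ?thesis
    using True assms by (auto simp: mprod_list_transvection exchange_singleton hom_part_def madd_def)
qed

lemma finite_of_mem_Fmr:
  assumes "P \<in> Fmr m r"
  shows "finite P"
proof -
  have "finite {I. I \<subseteq> {0..<m} \<and> card I = r}"
    by (rule finite_subset[of _ "Pow {0..<m}"]) auto
  with assms show ?thesis
    unfolding Fmr_def by (auto intro: finite_subset)
qed

lemma monomial_of_mem_Fmr:
  assumes "P \<in> Fmr m r" "I \<in> P"
  shows "finite I" "I \<subseteq> {..<m}" "card I = r"
  using assms unfolding Fmr_def by (auto simp: atLeast0LessThan intro: finite_subset)

lemma pi_map_transvection:
  assumes "P \<in> Fmr m r" "b < m" "a \<noteq> b"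
  shows "pi_map m r (transvection a b) (\<lambda>_. False) P = madd P (exchange a b P)"
  using finite_of_mem_Fmr[OF assms(1)] assms(1)
proof (induction P rule: finite_induct)
  case empty
  then show ?case
    by (simp add: pi_map_def msubst_empty exchange_empty hom_part_def madd_def)
next
  case (insert I P)
  have I: "finite I" "I \<subseteq> {..<m}" "card I = r"
    using monomial_of_mem_Fmr[OF insert.prems] by simp_all
  have P: "P \<in> Fmr m r"
    using insert.prems unfolding Fmr_def by simp
  have insert_eq: "insert I P = madd {I} P"
    using insert.hyps(2) unfolding madd_def by auto
  have "pi_map m r (transvection a b) (\<lambda>_. False) (insert I P)
      = madd (madd {I} (exchange a b {I})) (madd P (exchange a b P))"
    using insert.hyps insert.IH[OF P] I assms(2,3)
    by (simp add: pi_map_def msubst_insert hom_part_madd hom_part_mprod_list_transvection)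
  also have "\<dots> = madd (insert I P) (exchange a b (insert I P))"
    unfolding insert_eq exchange_madd by (auto simp: madd_def)
  finally show ?case .
qed

lemma madd_madd_cancel: "madd P (madd P Q) = Q"
  unfolding madd_def by auto

lemma exchange_exchange: "exchange b a (exchange a b P) = {K \<in> P. a \<in> K \<and> b \<notin> K}"
proof (rule set_eqI)
  fix K
  show "K \<in> exchange b a (exchange a b P) \<longleftrightarrow> K \<in> {K \<in> P. a \<in> K \<and> b \<notin> K}"
  proof (cases "a \<in> K \<and> b \<notin> K")
    case True
    then have "insert a (insert b (K - {a}) - {b}) = K" "a \<notin> insert b (K - {a})"
      by auto
    with True show ?thesis
      unfolding exchange_def by simp
  next
    case False
    then show ?thesis
      unfolding exchange_def by blast
  qed
qed

lemma obtain_mem_diff_of_card_eq: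
  assumes "finite J" "card I = card J" "I \<noteq> J"
  obtains a where "a \<in> I" "a \<notin> J"
  using assms card_subset_eq by blast

locale Sym_invariant_subspace =
  fixes m r :: nat and G :: "mlpoly set"
  assumes lin_subspace: "lin_subspace m r G"
    and Sym_invariant: "\<And>\<pi>. \<pi> \<in> Sym m r \<Longrightarrow> \<pi> ` G \<subseteq> G"
begin

lemma zero_mem: "{} \<in> G"
  using lin_subspace unfolding lin_subspace_def by blast

lemma madd_mem: "P \<in> G \<Longrightarrow> Q \<in> G \<Longrightarrow> madd P Q \<in> G"
  using lin_subspace unfolding lin_subspace_def by blast

lemma mem_Fmr: "P \<in> G \<Longrightarrow> P \<in> Fmr m r"
  using lin_subspace unfolding lin_subspace_def by blast

lemma exchange_mem:
  assumes "P \<in> G" "a < m" "b < m" "a \<noteq> b"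
  shows "exchange a b P \<in> G"
proof -
  have "pi_map m r (transvection a b) (\<lambda>_. False) \<in> Sym m r"
    unfolding Sym_def using transvection_in_GL2[OF assms(2-4)] by blast
  then have "pi_map m r (transvection a b) (\<lambda>_. False) P \<in> G"
    using Sym_invariant assms(1) by blast
  then have "madd P (exchange a b P) \<in> G"
    by (simp only: pi_map_transvection[OF mem_Fmr[OF assms(1)] assms(3,4)])
  with assms(1) have "madd P (madd P (exchange a b P)) \<in> G"
    by (rule madd_mem)
  then show ?thesis
    by (simp only: madd_madd_cancel)
qed

lemma restrict_mem:
  assumes "P \<in> G" "a < m" "b < m" "a \<noteq> b"
  shows "{K \<in> P. a \<in> K \<and> b \<notin> K} \<in> G"
  using exchange_mem[OF exchange_mem[OF assms] assms(3,2)] assms(4) by (simp add: exchange_exchange)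

lemma ex_monomial_mem:
  assumes "P \<in> G" "P \<noteq> {}"
  shows "\<exists>I. {I} \<in> G"
  using assms
proof (induction "card P" arbitrary: P rule: less_induct)
  case less
  show ?case
  proof (cases "\<exists>I. P = {I}")
    case True
    with less.prems show ?thesis by blast
  next
    case False
    with less.prems obtain I J where IJ: "I \<in> P" "J \<in> P" "I \<noteq> J"
      by blast
    note I = monomial_of_mem_Fmr[OF mem_Fmr[OF less.prems(1)] IJ(1)]
    note J = monomial_of_mem_Fmr[OF mem_Fmr[OF less.prems(1)] IJ(2)]
    obtain a where a: "a \<in> I" "a \<notin> J"
      using obtain_mem_diff_of_card_eq[of J I] I J IJ(3) by auto
    obtain b where b: "b \<in> J" "b \<notin> I"
      using obtain_mem_diff_of_card_eq[of I J] I J IJ(3) by auto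
    let ?Q = "{K \<in> P. a \<in> K \<and> b \<notin> K}"
    have "?Q \<in> G"
      using restrict_mem less.prems(1) a b I(2) J(2) by blast
    moreover have "card ?Q < card P"
      using IJ(2) b(1) finite_of_mem_Fmr[OF mem_Fmr[OF less.prems(1)]]
      by (intro psubset_card_mono) auto
    moreover have "?Q \<noteq> {}"
      using IJ(1) a(1) b(2) by blast
    ultimately show ?thesis
      using less.hyps by blast
  qed
qed

lemma monomial_mem:
  assumes "{I} \<in> G" "{K} \<in> Fmr m r"
  shows "{K} \<in> G"
  using assms
proof (induction "card (K - I)" arbitrary: I rule: less_induct)
  case less
  note I = monomial_of_mem_Fmr[OF mem_Fmr[OF less.prems(1)], of I, simplified]
  note K = monomial_of_mem_Fmr[OF less.prems(2), of K, simplified]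
  show ?case
  proof (cases "K = I")
    case True
    with less.prems show ?thesis by simp
  next
    case False
    obtain a where a: "a \<in> I" "a \<notin> K"
      using obtain_mem_diff_of_card_eq[of K I] I K False by auto
    obtain b where b: "b \<in> K" "b \<notin> I"
      using obtain_mem_diff_of_card_eq[of I K] I K False by auto
    let ?I' = "insert b (I - {a})"
    have "{?I'} \<in> G"
      using exchange_mem[OF less.prems(1), of a b] a b I(2) K(2) by (auto simp: exchange_singleton)
    moreover have "card (K - ?I') < card (K - I)"
      using a b K(1) by (intro psubset_card_mono) auto
    ultimately show ?thesis
      using less.hyps less.prems(2) by blast
  qed
qed

lemma eq_Fmr_if_nonzero:
  assumes "G \<noteq> {{}}"
  shows "G = Fmr m r"
proof -
  from assms obtain P where "P \<in> G" "P \<noteq> {}"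
    using zero_mem by blast
  then obtain I where I: "{I} \<in> G"
    using ex_monomial_mem by blast
  have "P \<in> G" if "P \<in> Fmr m r" for P
    using finite_of_mem_Fmr[OF that] that
  proof (induction P rule: finite_induct)
    case empty
    show ?case by (rule zero_mem)
  next
    case (insert K P)
    then have "{K} \<in> Fmr m r" "P \<in> Fmr m r"
      unfolding Fmr_def by auto
    with insert have "madd {K} P \<in> G"
      using madd_mem monomial_mem[OF I] by blast
    moreover have "madd {K} P = insert K P"
      using insert.hyps(2) unfolding madd_def by auto
    ultimately show ?case by simp
  qed
  then show ?thesis
    using mem_Fmr by blast
qed

end

theorem claim6p5:
  fixes m r :: nat and G :: "mlpoly set"
  assumes "m \<ge> 1" and "r \<le> m"
    and "lin_subspace m r G"
    and "\<forall>\<pi>\<in>Sym m r. \<pi> ` G = G"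
  shows "G = {{}} \<or> G = Fmr m r"
proof -
  interpret Sym_invariant_subspace m r G
    using assms(3,4) by unfold_locales auto
  show ?thesis
    using eq_Fmr_if_nonzero by blast
qed

end
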